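(* Let $n\ge 1$ and let $T$ be a Cayley tree on $[n]$ rooted at $1$. Then $\mathrm{lead}(T) = n - \mathrm{impe}(T)$, where $\mathrm{lead}(T)$ is the number of leading vertices of $T$ and $\mathrm{impe}(T)$ is the number of improper edges of $T$.
   Context: A Cayley tree of size $n$ is a tree whose vertices are labelled bijectively by $[n]=\{1,\dots,n\}$; we consider such trees rooted at the vertex $1$ and orient each edge $(i,j)$ from the parent $i$ to the child $j$. For a vertex $v$, $\beta_T(v)$ is the smallest label among the descendants of $v$ ($v$ itself included). An edge $(i,j)$ is improper if $\lambda_T(i) > \beta_T(j)$ (where $\lambda_T$ denotes the label), and proper otherwise. For a vertex $i$, let $L(i)=(1=a_0,a_1,\dots,a_k=i)$ be the path from the root to $i$; the greater ancestors path of $i$ is the longest suffix $(a_p,a_{p+1},\dots,a_k=i)$ of $L(i)$ such that every vertex $j$ on it satisfies $\lambda_T(j)\ge \lambda_T(i)$. The vertex $i$ is a leading vertex if $\beta_T(a_p)=\lambda_T(i)$. *)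

theory Defs
  imports Main
begin

text \<open>A Cayley tree on [n] = {1..n} rooted at 1 is encoded by its parent function
  par: every vertex i in {2..n} has a parent par i in {1..n}, and iterating par from i
  eventually reaches the root 1 (acyclicity/connectedness). The value par 1 is irrelevant.
  Edges are oriented parent -> child: the edge set is {(par j, j) | j in {2..n}}.\<close>

definition cayley_tree :: "nat \<Rightarrow> (nat \<Rightarrow> nat) \<Rightarrow> bool" where
  "cayley_tree n par \<longleftrightarrow>
     (\<forall>i\<in>{2..n}. par i \<in> {1..n} \<and> (\<exists>k. (par ^^ k) i = 1))"

text \<open>desc n par j v: j is a descendant of v (j itself included), i.e. v lies on the
  path from the root to j. The iteration stops at the root.\<close>
definition desc :: "nat \<Rightarrow> (nat \<Rightarrow> nat) \<Rightarrow> nat \<Rightarrow> nat \<Rightarrow> bool" where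
  "desc n par j v \<longleftrightarrow> j \<in> {1..n} \<and>
     (\<exists>k. (\<forall>m<k. (par ^^ m) j \<noteq> 1) \<and> (par ^^ k) j = v)"

definition beta :: "nat \<Rightarrow> (nat \<Rightarrow> nat) \<Rightarrow> nat \<Rightarrow> nat" where
  "beta n par v = Min {j. desc n par j v}"

definition impe :: "nat \<Rightarrow> (nat \<Rightarrow> nat) \<Rightarrow> nat" where
  "impe n par = card {j\<in>{2..n}. par j > beta n par j}"

text \<open>Vertices a of L(i) such that every vertex on the path from a to i has label \<ge> i;
  these are exactly the starting vertices of suffixes of L(i) satisfying the condition.\<close>
definition ga_starts :: "nat \<Rightarrow> (nat \<Rightarrow> nat) \<Rightarrow> nat \<Rightarrow> nat set" where
  "ga_starts n par i = {a. desc n par i a \<and>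
      (\<forall>w. desc n par i w \<and> desc n par w a \<longrightarrow> w \<ge> i)}"

text \<open>a_p: the start of the longest such suffix, i.e. the one closest to the root.\<close>
definition ga_top :: "nat \<Rightarrow> (nat \<Rightarrow> nat) \<Rightarrow> nat \<Rightarrow> nat" where
  "ga_top n par i = (THE a. a \<in> ga_starts n par i \<and>
      (\<forall>b\<in>ga_starts n par i. desc n par b a))"

definition leading :: "nat \<Rightarrow> (nat \<Rightarrow> nat) \<Rightarrow> nat \<Rightarrow> bool" where
  "leading n par i \<longleftrightarrow> beta n par (ga_top n par i) = i"

definition lead :: "nat \<Rightarrow> (nat \<Rightarrow> nat) \<Rightarrow> nat" where
  "lead n par = card {i\<in>{1..n}. leading n par i}"

end

theory Submission
  imports Defs
begin

text \<open>If the edge (par j, j) is proper then par j < beta j (equality is impossible, as par j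
  is not a descendant of j). The path from j down to beta j consists of descendants of j, so its
  labels are at least beta j, and it cannot be extended past par j: it is the greater ancestors
  path of beta j, and beta j is leading. Conversely, if i \<noteq> 1 is leading and its greater ancestors
  path starts at a, then a \<noteq> 1 and par a < i = beta a, so (par a, a) is proper. Hence
  j \<mapsto> beta j is a bijection from the n - 1 - impe proper edges onto the leading vertices other
  than the root, and the root is always leading.\<close>

locale cayley_tree_on =
  fixes n :: nat and par :: "nat \<Rightarrow> nat"
  assumes cayley_tree: "cayley_tree n par"
begin

definition depth :: "nat \<Rightarrow> nat" where
  "depth j = (LEAST k. (par ^^ k) j = 1)"

lemma parent_in_range: "j \<in> {2..n} \<Longrightarrow> par j \<in> {1..n}"
  using cayley_tree unfolding cayley_tree_def by blast

lemma root_reachable: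
  assumes "j \<in> {1..n}"
  shows "\<exists>k. (par ^^ k) j = 1"
proof (cases "j = 1")
  case True
  then show ?thesis by (intro exI[of _ 0]) simp
next
  case False
  with assms show ?thesis using cayley_tree unfolding cayley_tree_def by auto
qed

lemma depth_eqI:
  assumes "(par ^^ k) j = 1" and "\<forall>m<k. (par ^^ m) j \<noteq> 1"
  shows "depth j = k"
  unfolding depth_def by (rule Least_equality) (use assms not_less in auto)

lemma funpow_depth:
  assumes "j \<in> {1..n}"
  shows "(par ^^ depth j) j = 1" and "\<forall>m<depth j. (par ^^ m) j \<noteq> 1"
proof -
  obtain k where "(par ^^ k) j = 1" using root_reachable assms by blast
  then show "(par ^^ depth j) j = 1" unfolding depth_def by (rule LeastI)
  show "\<forall>m<depth j. (par ^^ m) j \<noteq> 1" unfolding depth_def using not_less_Least by blast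
qed

lemma depth_parent:
  assumes "j \<in> {2..n}"
  shows "depth j = Suc (depth (par j))"
proof -
  have j: "j \<in> {1..n}" using assms by auto
  obtain d where d: "depth j = Suc d"
    using funpow_depth(1)[OF j] assms by (cases "depth j") auto
  have "(par ^^ d) (par j) = 1"
    using funpow_depth(1)[OF j] d by (simp add: funpow_Suc_right del: funpow.simps)
  moreover have "\<forall>m<d. (par ^^ m) (par j) \<noteq> 1"
    using funpow_depth(2)[OF j] d by (auto simp add: funpow_Suc_right simp del: funpow.simps)
  ultimately have "depth (par j) = d" by (rule depth_eqI)
  with d show ?thesis by simp
qed

lemma depth_parent_less: "j \<in> {2..n} \<Longrightarrow> depth (par j) < depth j"
  using depth_parent by simp

lemma desc_iff:
  "desc n par j v \<longleftrightarrow> (j \<in> {1..n} \<and> v = j) \<or> (j \<in> {2..n} \<and> desc n par (par j) v)"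
proof
  assume "desc n par j v"
  then obtain k where j: "j \<in> {1..n}" and k: "\<forall>m<k. (par ^^ m) j \<noteq> 1" "(par ^^ k) j = v"
    unfolding desc_def by blast
  show "(j \<in> {1..n} \<and> v = j) \<or> (j \<in> {2..n} \<and> desc n par (par j) v)"
  proof (cases k)
    case 0
    then show ?thesis using j k by simp
  next
    case (Suc k')
    then have "j \<noteq> 1" using k(1) by (metis funpow_0 zero_less_Suc)
    with j have j2: "j \<in> {2..n}" by auto
    have "\<forall>m<k'. (par ^^ m) (par j) \<noteq> 1" and "(par ^^ k') (par j) = v"
      using k Suc by (auto simp add: funpow_Suc_right simp del: funpow.simps)
    then have "desc n par (par j) v" unfolding desc_def using parent_in_range[OF j2] by blast
    with j2 show ?thesis by blast
  qed
next
  assume "(j \<in> {1..n} \<and> v = j) \<or> (j \<in> {2..n} \<and> desc n par (par j) v)"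
  then show "desc n par j v"
  proof
    assume "j \<in> {1..n} \<and> v = j"
    then show ?thesis unfolding desc_def by (intro conjI exI[of _ 0]) auto
  next
    assume j: "j \<in> {2..n} \<and> desc n par (par j) v"
    then obtain k where k: "\<forall>m<k. (par ^^ m) (par j) \<noteq> 1" "(par ^^ k) (par j) = v"
      unfolding desc_def by blast
    have "\<forall>m<Suc k. (par ^^ m) j \<noteq> 1"
    proof (intro allI impI)
      fix m assume "m < Suc k"
      with j k show "(par ^^ m) j \<noteq> 1"
        by (cases m) (auto simp add: funpow_Suc_right simp del: funpow.simps)
    qed
    moreover have "(par ^^ Suc k) j = v" using k by (simp add: funpow_Suc_right del: funpow.simps)
    ultimately show ?thesis unfolding desc_def using j by (intro conjI exI[of _ "Suc k"]) auto
  qed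
qed

lemma desc_refl: "j \<in> {1..n} \<Longrightarrow> desc n par j j"
  using desc_iff[of j j] by blast

lemma desc_in_range: "desc n par j v \<Longrightarrow> j \<in> {1..n}"
  unfolding desc_def by blast

lemma desc_parentD: "desc n par j v \<Longrightarrow> v \<noteq> j \<Longrightarrow> j \<in> {2..n} \<and> desc n par (par j) v"
  using desc_iff[of j v] by blast

lemma desc_parent: "j \<in> {2..n} \<Longrightarrow> desc n par j (par j)"
  using desc_iff[of j "par j"] desc_refl[OF parent_in_range] by blast

lemma desc_ancestor_in_range: "desc n par j v \<Longrightarrow> v \<in> {1..n}"
proof (induction j rule: measure_induct_rule[of depth])
  case (less j)
  show ?case
  proof (cases "v = j")
    case True
    then show ?thesis using desc_in_range[OF less.prems] by simp
  next
    case False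
    then have "j \<in> {2..n}" and "desc n par (par j) v" using desc_parentD[OF less.prems] by auto
    then show ?thesis using less.IH[OF depth_parent_less] by blast
  qed
qed

lemma depth_desc_less: "desc n par j v \<Longrightarrow> v \<noteq> j \<Longrightarrow> depth v < depth j"
proof (induction j rule: measure_induct_rule[of depth])
  case (less j)
  then have j: "j \<in> {2..n}" and d: "desc n par (par j) v" using desc_parentD by auto
  have "depth v \<le> depth (par j)" using less.IH[OF depth_parent_less[OF j] d] by fastforce
  with depth_parent_less[OF j] show ?case by simp
qed

lemma desc_antisym: "desc n par j a \<Longrightarrow> desc n par a j \<Longrightarrow> a = j"
  using depth_desc_less less_asym by blast

lemma desc_trans: "desc n par j w \<Longrightarrow> desc n par w a \<Longrightarrow> desc n par j a"
proof (induction j rule: measure_induct_rule[of depth])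
  case (less j)
  show ?case
  proof (cases "w = j")
    case True
    then show ?thesis using less.prems(2) by simp
  next
    case False
    then have j: "j \<in> {2..n}" and "desc n par (par j) w" using desc_parentD[OF less.prems(1)] by auto
    then have "desc n par (par j) a" using less.IH[OF depth_parent_less[OF j]] less.prems(2) by blast
    with j show ?thesis using desc_iff by blast
  qed
qed

lemma desc_linear: "desc n par i a \<Longrightarrow> desc n par i b \<Longrightarrow> desc n par a b \<or> desc n par b a"
proof (induction i rule: measure_induct_rule[of depth])
  case (less i)
  show ?case
  proof (cases "a = i \<or> b = i")
    case True
    then show ?thesis using less.prems by blast
  next
    case False
    then have "i \<in> {2..n}" "desc n par (par i) a" "desc n par (par i) b"
      using desc_parentD less.prems by auto
    then show ?thesis using less.IH[OF depth_parent_less] by blast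
  qed
qed

lemma finite_descendants: "finite {j. desc n par j v}"
  by (rule finite_subset[of _ "{1..n}"]) (auto dest: desc_in_range)

lemma beta_desc:
  assumes "v \<in> {1..n}"
  shows "desc n par (beta n par v) v"
proof -
  have "{j. desc n par j v} \<noteq> {}" using desc_refl assms by blast
  then show ?thesis unfolding beta_def using Min_in[OF finite_descendants] by blast
qed

lemma beta_le: "desc n par j v \<Longrightarrow> beta n par v \<le> j"
  unfolding beta_def using finite_descendants by auto

lemma beta_root: "n \<ge> 1 \<Longrightarrow> beta n par 1 = 1"
  using beta_desc[of 1] desc_in_range[of "beta n par 1" 1] beta_le[OF desc_refl, of 1]
  by fastforce

lemma self_in_ga_starts: "i \<in> {1..n} \<Longrightarrow> i \<in> ga_starts n par i"
  unfolding ga_starts_def using desc_refl desc_antisym by auto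

lemma ga_top_eqI:
  assumes a: "a \<in> ga_starts n par i" and exit: "a = 1 \<or> par a < i"
  shows "ga_top n par i = a"
proof -
  have ia: "desc n par i a" using a unfolding ga_starts_def by blast
  have top: "desc n par b a" if b: "b \<in> ga_starts n par i" for b
  proof (rule ccontr)
    assume ba: "\<not> desc n par b a"
    have ib: "desc n par i b" using b unfolding ga_starts_def by blast
    then have ab: "desc n par a b" using desc_linear ia ba by blast
    with ba have a2: "a \<in> {2..n}" and "desc n par (par a) b" using desc_parentD by auto
    moreover have "desc n par i (par a)" using desc_trans[OF ia desc_parent[OF a2]] .
    ultimately have "par a \<ge> i" using b unfolding ga_starts_def by blast
    with exit a2 show False by auto
  qed
  show ?thesis unfolding ga_top_def
  proof (rule the_equality)
    show "a \<in> ga_starts n par i \<and> (\<forall>b\<in>ga_starts n par i. desc n par b a)" using a top by blast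
  next
    fix a' assume "a' \<in> ga_starts n par i \<and> (\<forall>b\<in>ga_starts n par i. desc n par b a')"
    with a top show "a' = a" using desc_antisym by blast
  qed
qed

lemma ga_starts_exit:
  "a \<in> ga_starts n par i \<Longrightarrow> \<exists>a'\<in>ga_starts n par i. a' = 1 \<or> par a' < i"
proof (induction a rule: measure_induct_rule[of depth])
  case (less a)
  show ?case
  proof (cases "a = 1 \<or> par a < i")
    case True
    then show ?thesis using less.prems by blast
  next
    case False
    have ia: "desc n par i a" using less.prems unfolding ga_starts_def by blast
    have a2: "a \<in> {2..n}" using desc_ancestor_in_range[OF ia] False by auto
    have "par a \<in> ga_starts n par i"
      unfolding ga_starts_def
    proof (intro CollectI conjI allI impI)
      show "desc n par i (par a)" using desc_trans[OF ia desc_parent[OF a2]] .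
      fix w assume w: "desc n par i w \<and> desc n par w (par a)"
      show "i \<le> w"
      proof (cases "desc n par w a")
        case True
        then show ?thesis using w less.prems unfolding ga_starts_def by blast
      next
        case False
        then have "desc n par a w" using desc_linear ia w by blast
        with False have "desc n par (par a) w" using desc_parentD by blast
        with w have "w = par a" using desc_antisym by blast
        with \<open>\<not> (a = 1 \<or> par a < i)\<close> show ?thesis by simp
      qed
    qed
    then show ?thesis using less.IH[OF depth_parent_less[OF a2]] by blast
  qed
qed

lemma parent_ne_beta: "j \<in> {2..n} \<Longrightarrow> par j \<noteq> beta n par j"
  using beta_desc[of j] desc_parent desc_antisym depth_parent by fastforce

lemma ga_top_beta:
  assumes "j \<in> {2..n}" and "par j < beta n par j"
  shows "ga_top n par (beta n par j) = j"
proof (rule ga_top_eqI)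
  show "j \<in> ga_starts n par (beta n par j)"
    unfolding ga_starts_def using assms(1) beta_desc beta_le by auto
qed (use assms(2) in simp)

lemma leading_root: "n \<ge> 1 \<Longrightarrow> leading n par 1"
  unfolding leading_def using ga_top_eqI[OF self_in_ga_starts] beta_root by simp

lemma leading_beta: "j \<in> {2..n} \<Longrightarrow> par j < beta n par j \<Longrightarrow> leading n par (beta n par j)"
  unfolding leading_def using ga_top_beta by simp

lemma leading_betaE:
  assumes i: "i \<in> {2..n}" and "leading n par i"
  obtains j where "j \<in> {2..n}" and "par j < beta n par j" and "i = beta n par j"
proof -
  have i1: "i \<in> {1..n}" using i by simp
  obtain a where a: "a \<in> ga_starts n par i" and exit: "a = 1 \<or> par a < i"
    using ga_starts_exit[OF self_in_ga_starts[OF i1]] by blast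
  have beta_a: "beta n par a = i" using assms(2) ga_top_eqI[OF a exit] unfolding leading_def by simp
  have "a \<noteq> 1"
    using a i desc_refl[of 1] unfolding ga_starts_def by fastforce
  moreover have "a \<in> {1..n}"
    using a desc_ancestor_in_range unfolding ga_starts_def by blast
  ultimately have a2: "a \<in> {2..n}" by auto
  from exit \<open>a \<noteq> 1\<close> beta_a have "par a < beta n par a" by simp
  from a2 this beta_a[symmetric] show ?thesis by (rule that)
qed

lemma leading_set_eq:
  assumes "n \<ge> 1"
  shows "{i \<in> {1..n}. leading n par i} = insert 1 (beta n par ` {j \<in> {2..n}. par j < beta n par j})"
  (is "?L = insert 1 (beta n par ` ?P)")
proof
  show "?L \<subseteq> insert 1 (beta n par ` ?P)"
  proof
    fix i assume i: "i \<in> ?L"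
    show "i \<in> insert 1 (beta n par ` ?P)"
    proof (cases "i = 1")
      case False
      with i have "i \<in> {2..n}" and "leading n par i" by auto
      then obtain j where "j \<in> {2..n}" "par j < beta n par j" "i = beta n par j"
        by (rule leading_betaE)
      then show ?thesis by blast
    qed simp
  qed
  have "beta n par j \<in> ?L" if "j \<in> ?P" for j
    using that leading_beta desc_in_range[OF beta_desc, of j] by auto
  with assms show "insert 1 (beta n par ` ?P) \<subseteq> ?L"
    using leading_root by auto
qed

lemma inj_on_beta_proper: "inj_on (beta n par) {j \<in> {2..n}. par j < beta n par j}"
  by (rule inj_on_inverseI[where g = "ga_top n par"]) (use ga_top_beta in auto)

lemma root_notin_beta_proper: "1 \<notin> beta n par ` {j \<in> {2..n}. par j < beta n par j}"
proof
  assume "1 \<in> beta n par ` {j \<in> {2..n}. par j < beta n par j}"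
  then obtain j where "j \<in> {2..n}" and "par j < 1" by auto
  then show False using parent_in_range[of j] by simp
qed

lemma lead_eq_Suc_card_proper:
  assumes "n \<ge> 1"
  shows "lead n par = Suc (card {j \<in> {2..n}. par j < beta n par j})"
  unfolding lead_def leading_set_eq[OF assms]
  using card_image[OF inj_on_beta_proper] root_notin_beta_proper by simp

lemma impe_plus_card_proper: "impe n par + card {j \<in> {2..n}. par j < beta n par j} = n - 1"
proof -
  let ?I = "{j \<in> {2..n}. beta n par j < par j}" and ?P = "{j \<in> {2..n}. par j < beta n par j}"
  have "beta n par j < par j \<or> par j < beta n par j" if "j \<in> {2..n}" for j
    using parent_ne_beta[OF that] by linarith
  then have "?I \<union> ?P = {2..n}" by blast
  then have "n - 1 = card (?I \<union> ?P)" by simp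
  also have "\<dots> = card ?I + card ?P" by (rule card_Un_disjoint) auto
  finally show ?thesis unfolding impe_def by simp
qed

end

theorem lemma11:
  fixes n :: nat and par :: "nat \<Rightarrow> nat"
  assumes "n \<ge> 1" and "cayley_tree n par"
  shows "lead n par = n - impe n par"
proof -
  interpret cayley_tree_on n par using assms(2) by unfold_locales
  show ?thesis
    using lead_eq_Suc_card_proper[OF assms(1)] impe_plus_card_proper assms(1) by simp
qed

end
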